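(* Let $T$ be an operator on a complex Hilbert space of dimension $n$ belonging to $\Upsilon_n$. Then the boundary $\partial W(T)$ of the numerical range of $T$ is a regular arc, and the function $\lambda(\theta)$ is differentiable for all $\theta\in[0,2\pi)$.
   Context: $\Upsilon_n$ is the class of all completely nonunitary contractions $T$ on an $n$-dimensional space (i.e. $\|T\|\le1$ and $T$ has no eigenvalue of modulus $1$) with $\operatorname{rank}(I-T^*T)=1$. $W(T)=\{\langle Tx,x\rangle:\|x\|=1\}$. For $\theta$ real, $\lambda(\theta)$ is the largest eigenvalue of the Hermitian matrix $\mathscr{R}e(e^{-i\theta}T)=\frac12(e^{-i\theta}T+e^{i\theta}T^* )$; it is the signed distance from the origin to the supporting line of $W(T)$ perpendicular to the ray of angle $\theta$. A regular arc of $\partial W(T)$ is one containing neither corner points nor straight line segments. *)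

theory Defs
  imports "HOL-Analysis.Analysis"
begin

text \<open>Operators on an n-dimensional complex Hilbert space are represented as
  complex n x n matrices acting on complex^'n (standard inner product).\<close>

definition cinner :: "complex^'n \<Rightarrow> complex^'n \<Rightarrow> complex" where
  "cinner x y = (\<Sum>i\<in>UNIV. x$i * cnj (y$i))"

definition adjoint_mat :: "complex^'n^'n \<Rightarrow> complex^'n^'n" where
  "adjoint_mat A = (\<chi> i j. cnj (A$j$i))"

definition is_eigenvalue :: "complex^'n^'n \<Rightarrow> complex \<Rightarrow> bool" where
  "is_eigenvalue A c \<longleftrightarrow> (\<exists>x. x \<noteq> 0 \<and> A *v x = c *s x)"

text \<open>The class Upsilon_n: completely nonunitary contractions with rank(I - T*T) = 1.\<close>
definition Upsilon :: "complex^'n^'n \<Rightarrow> bool" where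
  "Upsilon T \<longleftrightarrow> (\<forall>x. norm (T *v x) \<le> norm x)
      \<and> (\<forall>c. is_eigenvalue T c \<longrightarrow> cmod c \<noteq> 1)
      \<and> rank (mat 1 - adjoint_mat T ** T) = 1"

definition numerical_range :: "complex^'n^'n \<Rightarrow> complex set" where
  "numerical_range T = {cinner (T *v x) x | x. norm x = 1}"

definition re_part :: "real \<Rightarrow> complex^'n^'n \<Rightarrow> complex^'n^'n" where
  "re_part \<theta> T = (\<chi> i j. (exp (- \<i> * of_real \<theta>) * T$i$j + exp (\<i> * of_real \<theta>) * adjoint_mat T$i$j) / 2)"

definition lam :: "complex^'n^'n \<Rightarrow> real \<Rightarrow> real" where
  "lam T \<theta> = Max {\<mu>::real. is_eigenvalue (re_part \<theta> T) (of_real \<mu>)}"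

definition supports :: "complex set \<Rightarrow> complex \<Rightarrow> complex \<Rightarrow> bool" where
  "supports W p u \<longleftrightarrow> cmod u = 1 \<and> (\<forall>w\<in>W. Re (cnj u * w) \<le> Re (cnj u * p))"

definition corner_point :: "complex set \<Rightarrow> complex \<Rightarrow> bool" where
  "corner_point W p \<longleftrightarrow> p \<in> frontier W \<and>
     (\<exists>u1 u2. u1 \<noteq> u2 \<and> supports W p u1 \<and> supports W p u2)"

text \<open>The boundary is a regular arc: no corner points and no (nondegenerate) line segments.\<close>
definition regular_boundary :: "complex set \<Rightarrow> bool" where
  "regular_boundary W \<longleftrightarrow> \<not> (\<exists>p. corner_point W p) \<and>
     \<not> (\<exists>a b. a \<noteq> b \<and> closed_segment a b \<subseteq> frontier W)"

end

theory Submission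
  imports Defs
begin

text \<open>For a unit direction \<open>u\<close>, the supporting line of \<open>W(T)\<close> orthogonal to \<open>u\<close> is at distance the
  largest eigenvalue of the Hermitian matrix \<open>Re (cnj u T)\<close>, and the points of \<open>W(T)\<close> on it are the
  values \<open>\<langle>T x, x\<rangle>\<close> at unit eigenvectors \<open>x\<close> for that eigenvalue. Since \<open>I - T\<^sup>* T\<close> has rank one,
  \<open>T\<close> is isometric on a hyperplane, and complete nonunitarity rules out eigenvectors of
  \<open>Re (cnj u T)\<close> on which \<open>T\<close> is isometric; hence all eigenspaces of \<open>Re (cnj u T)\<close> are
  one-dimensional, and every supporting line meets \<open>W(T)\<close> in a single point. This excludes
  segments in the boundary and, by the envelope theorem, makes \<open>\<lambda>\<close> differentiable. At a corner
  \<open>p = \<langle>T x, x\<rangle>\<close>, \<open>x\<close> would be an eigenvector of \<open>Re (cnj u T)\<close> for two non-opposite directions,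
  hence a common eigenvector of \<open>T\<close> and \<open>T\<^sup>*\<close>; then \<open>T\<close> is isometric on \<open>x\<^sup>\<bottom>\<close>, which squeezes
  \<open>W(T)\<close> into a line, impossible in dimension at least two.\<close>

section \<open>The complex inner product\<close>

lemma cinner_add_left: "cinner (x + y) z = cinner x z + cinner y z"
  by (simp add: cinner_def distrib_right sum.distrib)

lemma cinner_add_right: "cinner x (y + z) = cinner x y + cinner x z"
  by (simp add: cinner_def distrib_left sum.distrib)

lemma cinner_diff_left: "cinner (x - y) z = cinner x z - cinner y z"
  by (simp add: cinner_def left_diff_distrib sum_subtractf)

lemma cinner_scale_left: "cinner (c *s x) y = c * cinner x y"
  by (simp add: cinner_def sum_distrib_left mult.assoc)

lemma cinner_scale_right: "cinner x (c *s y) = cnj c * cinner x y"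
  by (simp add: cinner_def sum_distrib_left mult_ac)

lemma cnj_cinner: "cnj (cinner x y) = cinner y x"
  by (simp add: cinner_def mult.commute)

lemma Re_cinner: "Re (cinner x y) = x \<bullet> y"
  by (simp add: cinner_def inner_vec_def inner_complex_def Re_sum)

lemma cinner_self: "cinner x x = complex_of_real ((norm x)\<^sup>2)"
proof -
  have "Im (cinner x x) = 0"
    by (simp add: cinner_def Im_sum)
  then show ?thesis
    by (simp add: complex_eq_iff Re_cinner power2_norm_eq_inner)
qed

lemma cinner_adjoint: "cinner (A *v x) y = cinner x (adjoint_mat A *v y)"
proof -
  have "cinner (A *v x) y = (\<Sum>i\<in>UNIV. \<Sum>j\<in>UNIV. A$i$j * x$j * cnj (y$i))"
    by (simp add: cinner_def matrix_vector_mult_def sum_distrib_right)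
  also have "\<dots> = (\<Sum>j\<in>UNIV. \<Sum>i\<in>UNIV. A$i$j * x$j * cnj (y$i))"
    by (rule sum.swap)
  also have "\<dots> = cinner x (adjoint_mat A *v y)"
    by (simp add: cinner_def matrix_vector_mult_def adjoint_mat_def sum_distrib_left cnj_sum mult_ac)
  finally show ?thesis .
qed

lemma adjoint_mat_adjoint_mat [simp]: "adjoint_mat (adjoint_mat A) = A"
  by (simp add: adjoint_mat_def vec_eq_iff)

lemma cinner_adjoint_right: "cinner x (A *v y) = cinner (adjoint_mat A *v x) y"
  by (metis cinner_adjoint adjoint_mat_adjoint_mat)

lemma matrix_vector_mult_scale: "(A::complex^'n^'m) *v (c *s x) = c *s (A *v x)"
  by (simp add: vec_eq_iff matrix_vector_mult_def sum_distrib_left mult_ac)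

lemma of_real_vector_scalar_mult: "complex_of_real r *s x = r *\<^sub>R (x::complex^'n)"
  unfolding vec_eq_iff
  by (simp only: vector_smult_component vector_scaleR_component) (simp add: scaleR_conv_of_real)

lemma matrix_vector_mult_scaleR: "(A::complex^'n^'m) *v (t *\<^sub>R x) = t *\<^sub>R (A *v x)"
  by (metis matrix_vector_mult_scale of_real_vector_scalar_mult)

lemma norm_vector_scalar_mult: "norm (c *s (x::complex^'n)) = cmod c * norm x"
proof -
  have "(norm (c *s x))\<^sup>2 = Re (cinner (c *s x) (c *s x))"
    by (simp add: cinner_self)
  also have "\<dots> = Re (c * cnj c * cinner x x)"
    by (simp add: cinner_scale_left cinner_scale_right mult_ac)
  also have "\<dots> = (cmod c * norm x)\<^sup>2"
    by (simp add: cinner_self complex_mult_cnj cmod_power2 power_mult_distrib del: of_real_power)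
  finally show ?thesis
    by (simp add: power2_eq_iff_nonneg)
qed

lemma unimodular_cnj_mult: "cmod u = 1 \<Longrightarrow> cnj u * u = 1"
  by (metis complex_norm_square mult.commute of_real_1 power_one)

lemma cinner_unit_multiple:
  assumes "norm x = 1" "norm y = 1" "x = c *s y"
  shows "cinner (A *v x) x = cinner (A *v y) y"
proof -
  have "cmod c = 1"
    using assms by (simp add: norm_vector_scalar_mult)
  then have "cnj c * c = 1"
    by (rule unimodular_cnj_mult)
  then show ?thesis
    by (simp add: assms(3) matrix_vector_mult_scale cinner_scale_left cinner_scale_right mult_ac)
qed

lemma Re_cnj_mult: "Re (cnj u * w) = u \<bullet> w"
  by (simp add: inner_complex_def)

section \<open>Hermitian matrices and their largest eigenvalue\<close>

definition hermitian :: "complex^'n^'n \<Rightarrow> bool" where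
  "hermitian M \<longleftrightarrow> (\<forall>x y. cinner (M *v x) y = cinner x (M *v y))"

lemma hermitian_inner_sym: "hermitian M \<Longrightarrow> (M *v a) \<bullet> b = a \<bullet> (M *v b)"
  unfolding hermitian_def by (metis Re_cinner)

lemma quadratic_form_scaleR:
  "((M::complex^'n^'n) *v (t *\<^sub>R y)) \<bullet> (t *\<^sub>R y) = t\<^sup>2 * ((M *v y) \<bullet> y)"
  by (simp add: matrix_vector_mult_scaleR power2_eq_square)

lemma quadratic_form_le_on_sphere:
  assumes "\<And>z. norm z = 1 \<Longrightarrow> ((M::complex^'n^'n) *v z) \<bullet> z \<le> m"
  shows "(M *v y) \<bullet> y \<le> m * (norm y)\<^sup>2"
proof (cases "y = 0")
  case False
  define z where "z = (1 / norm y) *\<^sub>R y"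
  have "norm z = 1" "y = norm y *\<^sub>R z"
    using False by (simp_all add: z_def)
  then have "(M *v y) \<bullet> y = (norm y)\<^sup>2 * ((M *v z) \<bullet> z)"
    by (metis quadratic_form_scaleR)
  with assms[OF \<open>norm z = 1\<close>] show ?thesis
    by (metis mult.commute mult_left_mono zero_le_power2)
qed simp

lemma quadratic_form_attains_max:
  fixes M :: "complex^'n^'n"
  obtains y0 m where "norm y0 = 1" "\<And>y. (M *v y) \<bullet> y \<le> m * (norm y)\<^sup>2" "(M *v y0) \<bullet> y0 = m"
proof -
  have "continuous_on (sphere 0 1) (\<lambda>y. (M *v y) \<bullet> y)"
    unfolding matrix_vector_mult_def inner_vec_def by (intro continuous_intros)
  moreover have "sphere (0::complex^'n) 1 \<noteq> {}"
    by (simp add: sphere_eq_empty)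
  ultimately obtain y0 where "y0 \<in> sphere 0 1" and "\<forall>y\<in>sphere 0 1. (M *v y) \<bullet> y \<le> (M *v y0) \<bullet> y0"
    using continuous_attains_sup[OF compact_sphere] by blast
  then show ?thesis
    using that quadratic_form_le_on_sphere[of M "(M *v y0) \<bullet> y0"] by auto
qed

text \<open>A maximiser of the Rayleigh quotient is an eigenvector: if \<open>r = M y0 - m y0 \<noteq> 0\<close>, the
  nonnegative form \<open>F y = m |y|\<^sup>2 - (M y) \<bullet> y\<close> would become negative at \<open>y0 + t r\<close> for small \<open>t > 0\<close>.\<close>

lemma hermitian_form_maximiser_eigenvector:
  fixes M :: "complex^'n^'n"
  assumes h: "hermitian M" and le: "\<And>y. (M *v y) \<bullet> y \<le> m * (norm y)\<^sup>2"
    and eq: "(M *v y0) \<bullet> y0 = m * (norm y0)\<^sup>2"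
  shows "M *v y0 = m *\<^sub>R y0"
proof -
  define r where "r = M *v y0 - m *\<^sub>R y0"
  define F where "F y = m * (norm y)\<^sup>2 - (M *v y) \<bullet> y" for y
  have F_nonneg: "F y \<ge> 0" for y
    using le by (simp add: F_def)
  have F_y0: "F y0 = 0"
    using eq by (simp add: F_def)
  have F_line: "F (y0 + t *\<^sub>R r) = F y0 - 2 * t * (r \<bullet> r) + t\<^sup>2 * F r" for t
  proof -
    have sym: "(M *v r) \<bullet> y0 = (M *v y0) \<bullet> r"
      using hermitian_inner_sym[OF h, of r y0] by (simp add: inner_commute)
    have r: "(M *v y0) \<bullet> r - m * (y0 \<bullet> r) = r \<bullet> r"
      by (simp add: r_def inner_diff_left)
    show ?thesis
      using r unfolding F_def power2_norm_eq_inner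
      by (simp add: matrix_vector_right_distrib matrix_vector_mult_scaleR inner_add_left
          inner_add_right sym inner_commute[of y0 r] algebra_simps power2_eq_square)
  qed
  have "r \<bullet> r = 0"
  proof (rule ccontr)
    assume "r \<bullet> r \<noteq> 0"
    then have rr: "r \<bullet> r > 0"
      by (metis inner_gt_zero_iff inner_zero_left)
    define t where "t = (r \<bullet> r) / (F r + 1)"
    have "t > 0"
      using rr F_nonneg[of r] by (simp add: t_def)
    have "0 \<le> F (y0 + t *\<^sub>R r)"
      by (rule F_nonneg)
    also have "\<dots> = t * (t * F r - 2 * (r \<bullet> r))"
      by (simp add: F_line F_y0 algebra_simps power2_eq_square)
    finally have "2 * (r \<bullet> r) \<le> t * F r"
      using \<open>t > 0\<close> by (simp add: zero_le_mult_iff)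
    moreover have "t * F r \<le> r \<bullet> r"
      using rr F_nonneg[of r] by (simp add: t_def divide_le_eq)
    ultimately show False
      using rr by linarith
  qed
  then show ?thesis
    by (simp add: r_def)
qed

lemma hermitian_eigenvectors_orthogonal:
  assumes "hermitian M" "M *v a = \<mu> *\<^sub>R a" "M *v b = \<nu> *\<^sub>R b" "\<mu> \<noteq> \<nu>"
  shows "cinner a b = 0"
proof -
  have "cinner (M *v a) b = cinner a (M *v b)"
    using assms(1) by (simp add: hermitian_def)
  then have "of_real \<mu> * cinner a b = of_real \<nu> * cinner a b"
    using assms(2,3)
    by (simp add: of_real_vector_scalar_mult[symmetric] cinner_scale_left cinner_scale_right)
  then show ?thesis
    using assms(4) by simp
qed

lemma hermitian_finite_real_eigenvalues:
  fixes M :: "complex^'n^'n"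
  assumes h: "hermitian M"
  shows "finite {\<mu>::real. is_eigenvalue M (of_real \<mu>)}" (is "finite ?E")
proof -
  define v where "v \<mu> = (SOME x. x \<noteq> 0 \<and> M *v x = \<mu> *\<^sub>R x)" for \<mu>
  have v: "v \<mu> \<noteq> 0 \<and> M *v v \<mu> = \<mu> *\<^sub>R v \<mu>" if "\<mu> \<in> ?E" for \<mu>
  proof -
    from that have "\<exists>x. x \<noteq> 0 \<and> M *v x = \<mu> *\<^sub>R x"
      by (simp add: is_eigenvalue_def of_real_vector_scalar_mult)
    then show ?thesis
      unfolding v_def by (rule someI_ex)
  qed
  have "inj_on v ?E"
  proof (rule inj_onI)
    fix a b assume ab: "a \<in> ?E" "b \<in> ?E" "v a = v b"
    then have "a *\<^sub>R v a = b *\<^sub>R v a"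
      using v by metis
    then show "a = b"
      using v[OF ab(1)] by (simp add: scaleR_cancel_right)
  qed
  moreover have "pairwise orthogonal (v ` ?E)"
  proof -
    have "v a \<bullet> v b = 0" if "a \<in> ?E" "b \<in> ?E" "v a \<noteq> v b" for a b
    proof -
      have "a \<noteq> b"
        using that(3) by auto
      then have "cinner (v a) (v b) = 0"
        using hermitian_eigenvectors_orthogonal[OF h] v[OF that(1)] v[OF that(2)] by blast
      then show ?thesis
        by (metis Re_cinner zero_complex.sel(1))
    qed
    then show ?thesis
      unfolding pairwise_def orthogonal_def by blast
  qed
  then have "finite (v ` ?E)"
    by (rule pairwise_orthogonal_imp_finite)
  ultimately show ?thesis
    using finite_imageD by blast
qed

lemma hermitian_max_eigenvalue:
  fixes M :: "complex^'n^'n"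
  assumes h: "hermitian M"
  obtains y0 where "norm y0 = 1" "\<And>y. (M *v y) \<bullet> y \<le> Max {\<mu>. is_eigenvalue M (of_real \<mu>)} * (norm y)\<^sup>2"
    "M *v y0 = Max {\<mu>. is_eigenvalue M (of_real \<mu>)} *\<^sub>R y0"
proof -
  obtain y0 m where y0: "norm y0 = 1" and le: "\<And>y. (M *v y) \<bullet> y \<le> m * (norm y)\<^sup>2"
    and eq: "(M *v y0) \<bullet> y0 = m"
    using quadratic_form_attains_max by blast
  have ev: "M *v y0 = m *\<^sub>R y0"
    using hermitian_form_maximiser_eigenvector[OF h le, of y0] eq y0 by simp
  have "Max {\<mu>. is_eigenvalue M (of_real \<mu>)} = m"
  proof (rule Max_eqI)
    show "finite {\<mu>. is_eigenvalue M (of_real \<mu>)}"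
      by (rule hermitian_finite_real_eigenvalues[OF h])
    show "m \<in> {\<mu>. is_eigenvalue M (of_real \<mu>)}"
      using ev y0 by (auto simp: is_eigenvalue_def of_real_vector_scalar_mult intro!: exI[of _ y0])
  next
    fix \<mu> assume "\<mu> \<in> {\<mu>. is_eigenvalue M (of_real \<mu>)}"
    then obtain x where x: "x \<noteq> 0" "M *v x = \<mu> *\<^sub>R x"
      by (auto simp: is_eigenvalue_def of_real_vector_scalar_mult)
    have "\<mu> * (norm x)\<^sup>2 = (M *v x) \<bullet> x"
      using x by (simp add: power2_norm_eq_inner)
    also have "\<dots> \<le> m * (norm x)\<^sup>2"
      by (rule le)
    finally show "\<mu> \<le> m"
      using x by simp
  qed
  then show ?thesis
    using that y0 le ev by blast
qed

section \<open>The real part of a rotated matrix\<close>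

definition re_part_dir :: "complex^'n^'n \<Rightarrow> complex \<Rightarrow> complex^'n^'n" where
  "re_part_dir T u = (\<chi> i j. (cnj u * T$i$j + u * adjoint_mat T$i$j) / 2)"

lemma re_part_eq_re_part_dir: "re_part \<theta> T = re_part_dir T (exp (\<i> * of_real \<theta>))"
proof -
  have "cnj (exp (\<i> * complex_of_real \<theta>)) = exp (- \<i> * of_real \<theta>)"
    by (simp add: exp_cnj)
  then show ?thesis
    by (simp add: re_part_def re_part_dir_def)
qed

lemma re_part_dir_mult_component:
  "(re_part_dir T u *v x) $ i = (cnj u * (T *v x) $ i + u * (adjoint_mat T *v x) $ i) / 2"
  by (simp add: re_part_dir_def matrix_vector_mult_def sum_divide_distrib sum_distrib_left
      sum.distrib[symmetric] algebra_simps)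

lemma re_part_dir_mult:
  "re_part_dir T u *v x = (1/2) *s (cnj u *s (T *v x) + u *s (adjoint_mat T *v x))"
  by (simp add: vec_eq_iff re_part_dir_mult_component)

lemma hermitian_re_part_dir: "hermitian (re_part_dir T u)"
proof -
  have "adjoint_mat (re_part_dir T u) = re_part_dir T u"
    by (simp add: vec_eq_iff re_part_dir_def adjoint_mat_def add.commute)
  then show ?thesis
    unfolding hermitian_def by (metis cinner_adjoint)
qed

lemma re_part_dir_form: "(re_part_dir T u *v y) \<bullet> y = u \<bullet> cinner (T *v y) y"
proof -
  have adj: "cinner (adjoint_mat T *v y) y = cnj (cinner (T *v y) y)"
    by (metis cinner_adjoint_right cnj_cinner)
  have "(re_part_dir T u *v y) \<bullet> y = Re (cinner (re_part_dir T u *v y) y)"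
    by (simp add: Re_cinner)
  also have "\<dots> = Re ((cnj u * cinner (T *v y) y + u * cnj (cinner (T *v y) y)) / 2)"
    by (simp add: re_part_dir_mult cinner_scale_left cinner_add_left adj)
  finally show ?thesis
    by (simp add: Re_cnj_mult[symmetric])
qed

lemma re_part_dir_uminus_form: "(re_part_dir T (- u) *v y) \<bullet> y = - ((re_part_dir T u *v y) \<bullet> y)"
  by (simp add: re_part_dir_form)

lemma re_part_dir_eigenvector_adjoint:
  assumes "re_part_dir T u *v x = m *\<^sub>R x" "cmod u = 1"
  shows "adjoint_mat T *v x = cnj u *s (2 * of_real m *s x - cnj u *s (T *v x))"
proof -
  have "(adjoint_mat T *v x) $ i = cnj u * (2 * of_real m * x $ i - cnj u * (T *v x) $ i)" for i
  proof -
    have "(cnj u * (T *v x) $ i + u * (adjoint_mat T *v x) $ i) / 2 = of_real m * x $ i"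
      using arg_cong[OF assms(1)[folded of_real_vector_scalar_mult], of "\<lambda>v. v $ i"]
      by (simp add: re_part_dir_mult_component)
    then have "u * (adjoint_mat T *v x) $ i = 2 * of_real m * x $ i - cnj u * (T *v x) $ i"
      by (simp add: field_simps)
    then have "cnj u * u * (adjoint_mat T *v x) $ i = cnj u * (2 * of_real m * x $ i - cnj u * (T *v x) $ i)"
      by (simp add: mult.assoc)
    then show ?thesis
      using unimodular_cnj_mult[OF assms(2)] by simp
  qed
  then show ?thesis
    by (simp add: vec_eq_iff algebra_simps)
qed

section \<open>The numerical range\<close>

lemma numerical_range_compact: "compact (numerical_range (T::complex^'n^'n))"
proof -
  have "numerical_range T = (\<lambda>x. cinner (T *v x) x) ` sphere 0 1"
    by (auto simp: numerical_range_def)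
  moreover have "continuous_on (sphere 0 1) (\<lambda>x::complex^'n. cinner (T *v x) x)"
    unfolding cinner_def matrix_vector_mult_def by (intro continuous_intros)
  ultimately show ?thesis
    by (metis compact_continuous_image compact_sphere)
qed

lemma normalized_form_in_numerical_range:
  assumes "x \<noteq> 0"
  shows "cinner (T *v x) x / of_real ((norm x)\<^sup>2) \<in> numerical_range T"
proof -
  define z where "z = (1 / norm x) *\<^sub>R x"
  have "norm z = 1"
    using assms by (simp add: z_def)
  moreover have "cinner (T *v z) z = cinner (T *v x) x / of_real ((norm x)\<^sup>2)"
    by (simp add: z_def matrix_vector_mult_scaleR of_real_vector_scalar_mult[symmetric]
        matrix_vector_mult_scale cinner_scale_left cinner_scale_right power2_eq_square)
  ultimately show ?thesis
    unfolding numerical_range_def by force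
qed

lemma cinner_form_scaleR_combination:
  "cinner (M *v (a *\<^sub>R x + b *\<^sub>R y)) (a *\<^sub>R x + b *\<^sub>R y) =
     of_real (a\<^sup>2) * cinner (M *v x) x + of_real (b\<^sup>2) * cinner (M *v y) y
     + of_real (a * b) * (cinner (M *v x) y + cinner (M *v y) x)"
  by (simp add: of_real_vector_scalar_mult[symmetric] matrix_vector_right_distrib matrix_vector_mult_scale
      cinner_add_left cinner_add_right cinner_scale_left cinner_scale_right power2_eq_square algebra_simps)

lemma cinner_form_on_segment:
  fixes T :: "complex^'n^'n" and x y :: "complex^'n" and t :: real
  defines "a \<equiv> (1 - t) *\<^sub>R x + t *\<^sub>R y" and "p \<equiv> cinner (T *v x) x"
  assumes "norm x = 1" "norm y = 1"
  shows "cinner (T *v a) a - p * cinner a a = of_real (t\<^sup>2) * (cinner (T *v y) y - p)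
    + of_real ((1 - t) * t) * (cinner (T *v x) y + cinner (T *v y) x - p * (cinner x y + cinner y x))"
proof -
  have aa: "cinner a a = of_real ((1 - t)\<^sup>2) + of_real (t\<^sup>2) + of_real ((1 - t) * t) * (cinner x y + cinner y x)"
    using cinner_form_scaleR_combination[of "mat 1" "1 - t" x t y] assms(3,4) by (simp add: a_def cinner_self)
  have Taa: "cinner (T *v a) a = of_real ((1 - t)\<^sup>2) * p + of_real (t\<^sup>2) * cinner (T *v y) y
      + of_real ((1 - t) * t) * (cinner (T *v x) y + cinner (T *v y) x)"
    unfolding a_def cinner_form_scaleR_combination p_def ..
  show ?thesis
    unfolding Taa aa by (simp add: algebra_simps)
qed

lemma segment_point_nonzero:
  fixes T :: "complex^'n^'n"
  assumes x: "norm x = 1" and y: "norm y = 1" and pq: "cinner (T *v x) x \<noteq> cinner (T *v y) y"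
    and t: "0 \<le> t" "t \<le> 1"
  shows "(1 - t) *\<^sub>R x + t *\<^sub>R y \<noteq> 0"
proof
  assume a0: "(1 - t) *\<^sub>R x + t *\<^sub>R y = 0"
  have "t \<noteq> 1"
    using a0 y by auto
  have "x = (1 / (1 - t)) *\<^sub>R ((1 - t) *\<^sub>R x)"
    using \<open>t \<noteq> 1\<close> by simp
  also have "\<dots> = (1 / (1 - t)) *\<^sub>R (- (t *\<^sub>R y))"
    using a0 eq_neg_iff_add_eq_0 by metis
  also have "\<dots> = (- t / (1 - t)) *\<^sub>R y"
    by simp
  finally have "x = of_real (- t / (1 - t)) *s y"
    by (simp only: of_real_vector_scalar_mult)
  then show False
    using pq x y cinner_unit_multiple by blast
qed

text \<open>Toeplitz--Hausdorff, first for the case where the cross terms of \<open>x\<close> and \<open>y\<close> are already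
  aligned with \<open>q - p\<close>: then the form along \<open>(1 - t) x + t y\<close>, normalised, runs along the line
  through \<open>p\<close> and \<open>q\<close> from \<open>p\<close> to \<open>q\<close>, and the intermediate value theorem applies.\<close>

lemma numerical_range_segment_aligned:
  fixes T :: "complex^'n^'n" and x y :: "complex^'n"
  defines "p \<equiv> cinner (T *v x) x" and "q \<equiv> cinner (T *v y) y"
    and "c \<equiv> cinner (T *v x) y + cinner (T *v y) x - cinner (T *v x) x * (cinner x y + cinner y x)"
  assumes x: "norm x = 1" and y: "norm y = 1" and pq: "p \<noteq> q"
    and aligned: "Im (c / (q - p)) = 0" and s: "0 \<le> s" "s \<le> 1"
  shows "p + of_real s * (q - p) \<in> numerical_range T"
proof -
  define k where "k = Re (c / (q - p))"
  have "c / (q - p) = of_real k"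
    using aligned by (simp add: k_def complex_eq_iff)
  then have cross: "c = (q - p) * of_real k"
    using pq by (simp add: field_simps)
  define a where "a t = (1 - t) *\<^sub>R x + t *\<^sub>R y" for t
  have form: "cinner (T *v a t) (a t) - p * cinner (a t) (a t) = (q - p) * of_real (t\<^sup>2 + (1 - t) * t * k)" for t
  proof -
    have "cinner (T *v a t) (a t) - p * cinner (a t) (a t) = of_real (t\<^sup>2) * (q - p) + of_real ((1 - t) * t) * c"
      unfolding a_def p_def q_def c_def by (rule cinner_form_on_segment[OF x y])
    then show ?thesis
      by (simp add: cross algebra_simps)
  qed
  have a_nonzero: "a t \<noteq> 0" if "0 \<le> t" "t \<le> 1" for t
    using segment_point_nonzero[OF x y pq[unfolded p_def q_def] that] by (simp add: a_def)
  define g where "g t = (t\<^sup>2 + (1 - t) * t * k) / (norm (a t))\<^sup>2" for t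
  have "continuous_on {0..1} g"
    unfolding g_def a_def using a_nonzero[unfolded a_def]
    by (intro continuous_intros) auto
  moreover have "g 0 = 0" "g 1 = 1"
    using y by (simp_all add: g_def a_def)
  ultimately obtain t where t: "0 \<le> t" "t \<le> 1" "g t = s"
    using IVT'[of g 0 s 1] s by auto
  have "t\<^sup>2 + (1 - t) * t * k = s * (norm (a t))\<^sup>2"
    using t(3) a_nonzero[OF t(1,2)] by (simp add: g_def divide_eq_eq)
  then have "cinner (T *v a t) (a t) = p * of_real ((norm (a t))\<^sup>2) + (q - p) * of_real (s * (norm (a t))\<^sup>2)"
    using form[of t] unfolding cinner_self by (metis diff_eq_eq add.commute)
  then have "cinner (T *v a t) (a t) / of_real ((norm (a t))\<^sup>2) = p + of_real s * (q - p)"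
    using a_nonzero[OF t(1,2)] by (simp add: field_simps)
  then show ?thesis
    using normalized_form_in_numerical_range[OF a_nonzero[OF t(1,2)], of T] by simp
qed

lemma exists_unimodular_real_combination: "\<exists>\<zeta>. cmod \<zeta> = 1 \<and> Im (cnj \<zeta> * a + \<zeta> * b) = 0"
proof -
  define e where "e = a - cnj b"
  define \<zeta> where "\<zeta> = (if e = 0 then 1 else sgn e)"
  have "cmod \<zeta> = 1"
    by (simp add: \<zeta>_def norm_sgn)
  moreover have "cnj \<zeta> * e = of_real (cmod e)"
  proof (cases "e = 0")
    case False
    then have "cnj \<zeta> * e = e * cnj e / of_real (cmod e)"
      by (simp add: \<zeta>_def sgn_eq)
    also have "\<dots> = of_real (cmod e)"
      using False by (simp add: complex_norm_square[symmetric] power2_eq_square)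
    finally show ?thesis .
  qed simp
  then have "Im (cnj \<zeta> * e) = 0"
    by (metis Im_complex_of_real)
  then have "Im (cnj \<zeta> * a + \<zeta> * b) = 0"
    by (simp add: e_def algebra_simps)
  ultimately show ?thesis
    by blast
qed

lemma numerical_range_segment:
  fixes T :: "complex^'n^'n" and x y :: "complex^'n"
  defines "p \<equiv> cinner (T *v x) x" and "q \<equiv> cinner (T *v y) y"
  assumes x: "norm x = 1" and y: "norm y = 1" and s: "0 \<le> s" "s \<le> 1"
  shows "p + of_real s * (q - p) \<in> numerical_range T"
proof (cases "p = q")
  case True
  then show ?thesis
    using x unfolding numerical_range_def p_def by auto
next
  case False
  define d where "d = q - p"
  obtain \<zeta> where \<zeta>: "cmod \<zeta> = 1"
    and real: "Im (cnj \<zeta> * ((cinner (T *v x) y - p * cinner x y) / d) + \<zeta> * ((cinner (T *v y) x - p * cinner y x) / d)) = 0"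
    using exists_unimodular_real_combination by blast
  define y' where "y' = \<zeta> *s y"
  have y': "norm y' = 1" "cinner (T *v y') y' = q"
    using y \<zeta> cinner_unit_multiple[of y' y \<zeta> T] by (simp_all add: y'_def norm_vector_scalar_mult q_def)
  have "Im ((cinner (T *v x) y' + cinner (T *v y') x - p * (cinner x y' + cinner y' x)) / (q - p)) = 0"
    using real by (simp add: y'_def d_def matrix_vector_mult_scale cinner_scale_left cinner_scale_right
        add_divide_distrib diff_divide_distrib algebra_simps)
  then show ?thesis
    using numerical_range_segment_aligned[OF x y'(1), of T s] False s y' unfolding p_def by simp
qed

lemma numerical_range_convex: "convex (numerical_range (T::complex^'n^'n))"
proof (rule convexI)
  fix p q :: complex and u v :: real
  assume "p \<in> numerical_range T" "q \<in> numerical_range T" and uv: "0 \<le> u" "0 \<le> v" "u + v = 1"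
  then obtain x y where "norm x = 1" "p = cinner (T *v x) x" "norm y = 1" "q = cinner (T *v y) y"
    by (auto simp: numerical_range_def)
  moreover have "u *\<^sub>R p + v *\<^sub>R q = p + of_real v * (q - p)"
  proof -
    have "u *\<^sub>R p + v *\<^sub>R q = (u + v) *\<^sub>R p + v *\<^sub>R (q - p)"
      by (simp add: algebra_simps)
    then show ?thesis
      using uv by (simp add: scaleR_conv_of_real)
  qed
  ultimately show "u *\<^sub>R p + v *\<^sub>R q \<in> numerical_range T"
    using numerical_range_segment[of x y v T] uv by simp
qed

lemma numerical_range_bound_imp_form_bound:
  fixes T :: "complex^'n^'n"
  assumes "\<forall>w\<in>numerical_range T. u \<bullet> w \<le> M"
  shows "(re_part_dir T u *v z) \<bullet> z \<le> M * (norm z)\<^sup>2"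
proof (rule quadratic_form_le_on_sphere)
  fix y :: "complex^'n" assume "norm y = 1"
  then have "cinner (T *v y) y \<in> numerical_range T"
    by (auto simp: numerical_range_def)
  then show "(re_part_dir T u *v y) \<bullet> y \<le> M"
    using assms by (simp add: re_part_dir_form)
qed

lemma numerical_range_support_max_eigenvalue:
  fixes T :: "complex^'n^'n" and u :: complex
  defines "m \<equiv> Max {\<mu>. is_eigenvalue (re_part_dir T u) (of_real \<mu>)}"
  shows "\<forall>w\<in>numerical_range T. u \<bullet> w \<le> m"
    and "\<exists>y. norm y = 1 \<and> u \<bullet> cinner (T *v y) y = m"
proof -
  obtain y where y: "norm y = 1" and le: "\<And>z. (re_part_dir T u *v z) \<bullet> z \<le> m * (norm z)\<^sup>2"
    and ev: "re_part_dir T u *v y = m *\<^sub>R y"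
    using hermitian_max_eigenvalue[OF hermitian_re_part_dir] unfolding m_def by blast
  show "\<forall>w\<in>numerical_range T. u \<bullet> w \<le> m"
  proof
    fix w assume "w \<in> numerical_range T"
    then obtain x where "norm x = 1" "w = cinner (T *v x) x"
      by (auto simp: numerical_range_def)
    then show "u \<bullet> w \<le> m"
      using le[of x] by (simp add: re_part_dir_form)
  qed
  have "u \<bullet> cinner (T *v y) y = m * (norm y)\<^sup>2"
    using ev by (simp add: re_part_dir_form[symmetric] power2_norm_eq_inner)
  then show "\<exists>y. norm y = 1 \<and> u \<bullet> cinner (T *v y) y = m"
    using y by auto
qed

section \<open>Differentiability of support functions\<close>

lemma unique_maximizer_continuous:
  fixes W :: "complex set"
  assumes W: "compact W" and p_in: "\<And>\<theta>. p \<theta> \<in> W"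
    and max: "\<And>\<theta> w. w \<in> W \<Longrightarrow> cis \<theta> \<bullet> w \<le> cis \<theta> \<bullet> p \<theta>"
    and unique: "\<And>\<theta> w. w \<in> W \<Longrightarrow> cis \<theta> \<bullet> w = cis \<theta> \<bullet> p \<theta> \<Longrightarrow> w = p \<theta>"
  shows "continuous_on UNIV p"
proof (rule continuous_from_closed_graph[OF W])
  have "(\<lambda>\<theta>. (\<theta>, p \<theta>)) ` UNIV = (UNIV \<times> W) \<inter> (\<Inter>w\<in>W. {z. cis (fst z) \<bullet> w \<le> cis (fst z) \<bullet> snd z})"
  proof (intro equalityI subsetI)
    fix z assume "z \<in> (UNIV \<times> W) \<inter> (\<Inter>w\<in>W. {z. cis (fst z) \<bullet> w \<le> cis (fst z) \<bullet> snd z})"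
    then obtain \<theta> w where "z = (\<theta>, w)" "w \<in> W" "cis \<theta> \<bullet> p \<theta> \<le> cis \<theta> \<bullet> w"
      using p_in by fastforce
    then have "w = p \<theta>"
      using max unique by (simp add: order_antisym)
    then show "z \<in> (\<lambda>\<theta>. (\<theta>, p \<theta>)) ` UNIV"
      using \<open>z = (\<theta>, w)\<close> by simp
  qed (use p_in max in auto)
  moreover have "closed {z::real \<times> complex. cis (fst z) \<bullet> w \<le> cis (fst z) \<bullet> snd z}" for w
    by (intro closed_Collect_le continuous_intros)
  ultimately show "closed ((\<lambda>\<theta>. (\<theta>, p \<theta>)) ` UNIV)"
    using W by (simp add: closed_Int closed_INT closed_Times compact_imp_closed)
qed (use p_in in auto)

text \<open>Envelope theorem: for \<open>\<theta>\<close> near \<open>\<theta>0\<close>, the support function's difference quotient lies between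
  those of the linear functions \<open>\<theta> \<mapsto> cis \<theta> \<bullet> p \<theta>0\<close> and \<open>\<theta> \<mapsto> cis \<theta> \<bullet> p \<theta>\<close>, and both converge
  because the maximiser \<open>p\<close> is continuous.\<close>

lemma support_function_has_derivative:
  fixes W :: "complex set"
  assumes W: "compact W" and p_in: "\<And>\<theta>. p \<theta> \<in> W"
    and max: "\<And>\<theta> w. w \<in> W \<Longrightarrow> cis \<theta> \<bullet> w \<le> cis \<theta> \<bullet> p \<theta>"
    and unique: "\<And>\<theta> w. w \<in> W \<Longrightarrow> cis \<theta> \<bullet> w = cis \<theta> \<bullet> p \<theta> \<Longrightarrow> w = p \<theta>"
  shows "((\<lambda>\<theta>. cis \<theta> \<bullet> p \<theta>) has_real_derivative (\<i> * cis \<theta>0) \<bullet> p \<theta>0) (at \<theta>0)"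
proof -
  define h where "h \<theta> = cis \<theta> \<bullet> p \<theta>" for \<theta>
  define Q where "Q \<theta> = (1 / (\<theta> - \<theta>0)) *\<^sub>R (cis \<theta> - cis \<theta>0)" for \<theta>
  have "((\<lambda>\<theta>. (cos \<theta> - cos \<theta>0) / (\<theta> - \<theta>0)) \<longlongrightarrow> - sin \<theta>0) (at \<theta>0)"
    "((\<lambda>\<theta>. (sin \<theta> - sin \<theta>0) / (\<theta> - \<theta>0)) \<longlongrightarrow> cos \<theta>0) (at \<theta>0)"
    using DERIV_cos[of \<theta>0] DERIV_sin[of \<theta>0] by (simp_all add: has_field_derivative_iff)
  then have Q: "(Q \<longlongrightarrow> \<i> * cis \<theta>0) (at \<theta>0)"
    by (simp add: tendsto_complex_iff Q_def)
  have "continuous_on UNIV p"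
    by (rule unique_maximizer_continuous[OF W p_in max unique])
  then have "isCont p \<theta>0"
    by (rule continuous_on_interior) simp
  then have "(p \<longlongrightarrow> p \<theta>0) (at \<theta>0)"
    by (simp add: isCont_def)
  then have lim: "((\<lambda>\<theta>. Q \<theta> \<bullet> p \<theta>0) \<longlongrightarrow> (\<i> * cis \<theta>0) \<bullet> p \<theta>0) (at \<theta>0)"
    "((\<lambda>\<theta>. Q \<theta> \<bullet> p \<theta>) \<longlongrightarrow> (\<i> * cis \<theta>0) \<bullet> p \<theta>0) (at \<theta>0)"
    using tendsto_inner[OF Q tendsto_const] tendsto_inner[OF Q] by blast+
  have between: "min (Q \<theta> \<bullet> p \<theta>0) (Q \<theta> \<bullet> p \<theta>) \<le> (h \<theta> - h \<theta>0) / (\<theta> - \<theta>0) \<and>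
      (h \<theta> - h \<theta>0) / (\<theta> - \<theta>0) \<le> max (Q \<theta> \<bullet> p \<theta>0) (Q \<theta> \<bullet> p \<theta>)" if "\<theta> \<noteq> \<theta>0" for \<theta>
  proof -
    have lo: "(cis \<theta> - cis \<theta>0) \<bullet> p \<theta>0 \<le> h \<theta> - h \<theta>0"
      using max[OF p_in, of \<theta> \<theta>0] by (simp add: h_def inner_diff_left)
    have hi: "h \<theta> - h \<theta>0 \<le> (cis \<theta> - cis \<theta>0) \<bullet> p \<theta>"
      using max[OF p_in, of \<theta>0 \<theta>] by (simp add: h_def inner_diff_left)
    have Q_w: "Q \<theta> \<bullet> w = ((cis \<theta> - cis \<theta>0) \<bullet> w) / (\<theta> - \<theta>0)" for w
      by (simp add: Q_def)
    show ?thesis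
    proof (cases "\<theta> > \<theta>0")
      case True
      then have "Q \<theta> \<bullet> p \<theta>0 \<le> (h \<theta> - h \<theta>0) / (\<theta> - \<theta>0)" "(h \<theta> - h \<theta>0) / (\<theta> - \<theta>0) \<le> Q \<theta> \<bullet> p \<theta>"
        using lo hi Q_w by (simp_all add: divide_right_mono)
      then show ?thesis
        by linarith
    next
      case False
      then have "\<theta> - \<theta>0 < 0"
        using that by simp
      then have "Q \<theta> \<bullet> p \<theta> \<le> (h \<theta> - h \<theta>0) / (\<theta> - \<theta>0)" "(h \<theta> - h \<theta>0) / (\<theta> - \<theta>0) \<le> Q \<theta> \<bullet> p \<theta>0"
        using lo hi Q_w by (simp_all add: divide_right_mono_neg)
      then show ?thesis
        by linarith
    qed
  qed
  have "((\<lambda>\<theta>. (h \<theta> - h \<theta>0) / (\<theta> - \<theta>0)) \<longlongrightarrow> (\<i> * cis \<theta>0) \<bullet> p \<theta>0) (at \<theta>0)"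
  proof (rule tendsto_sandwich)
    show "\<forall>\<^sub>F \<theta> in at \<theta>0. min (Q \<theta> \<bullet> p \<theta>0) (Q \<theta> \<bullet> p \<theta>) \<le> (h \<theta> - h \<theta>0) / (\<theta> - \<theta>0)"
      "\<forall>\<^sub>F \<theta> in at \<theta>0. (h \<theta> - h \<theta>0) / (\<theta> - \<theta>0) \<le> max (Q \<theta> \<bullet> p \<theta>0) (Q \<theta> \<bullet> p \<theta>)"
      using between by (auto simp: eventually_at_filter)
    show "((\<lambda>\<theta>. min (Q \<theta> \<bullet> p \<theta>0) (Q \<theta> \<bullet> p \<theta>)) \<longlongrightarrow> (\<i> * cis \<theta>0) \<bullet> p \<theta>0) (at \<theta>0)"
      "((\<lambda>\<theta>. max (Q \<theta> \<bullet> p \<theta>0) (Q \<theta> \<bullet> p \<theta>)) \<longlongrightarrow> (\<i> * cis \<theta>0) \<bullet> p \<theta>0) (at \<theta>0)"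
      using tendsto_min[OF lim] tendsto_max[OF lim] by simp_all
  qed
  then show ?thesis
    by (simp add: has_field_derivative_iff h_def)
qed

section \<open>Completely nonunitary contractions\<close>

lemma contraction_adjoint_unimodular_eigenvector:
  fixes T :: "complex^'n^'n"
  assumes contr: "\<forall>x. norm (T *v x) \<le> norm x"
    and ev: "adjoint_mat T *v v = \<mu> *s v" and \<mu>: "cmod \<mu> = 1"
  shows "T *v v = cnj \<mu> *s v"
proof -
  have "cinner (T *v v) (cnj \<mu> *s v) = \<mu> * cinner v (adjoint_mat T *v v)"
    by (simp add: cinner_scale_right cinner_adjoint)
  also have "\<dots> = cnj \<mu> * \<mu> * cinner v v"
    by (simp add: ev cinner_scale_right)
  finally have cross: "cinner (T *v v) (cnj \<mu> *s v) = of_real ((norm v)\<^sup>2)"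
    using unimodular_cnj_mult[OF \<mu>] by (simp add: cinner_self)
  have "(norm (T *v v - cnj \<mu> *s v))\<^sup>2 = (norm (T *v v))\<^sup>2 - 2 * ((T *v v) \<bullet> (cnj \<mu> *s v))
      + (norm (cnj \<mu> *s v))\<^sup>2"
    by (simp add: power2_norm_eq_inner inner_diff_left inner_diff_right inner_commute)
  also have "\<dots> = (norm (T *v v))\<^sup>2 - (norm v)\<^sup>2"
    using cross \<mu> by (simp add: Re_cinner[symmetric] norm_vector_scalar_mult)
  also have "\<dots> \<le> 0"
    using contr by (simp add: power_mono)
  finally show ?thesis
    by simp
qed

lemma re_part_dir_eigenvalue_abs_le_1:
  fixes T :: "complex^'n^'n"
  assumes contr: "\<forall>x. norm (T *v x) \<le> norm x" and u: "cmod u = 1"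
    and ev: "re_part_dir T u *v z = m *\<^sub>R z" and z: "z \<noteq> 0"
  shows "\<bar>m\<bar> \<le> 1"
proof -
  have "m * (norm z)\<^sup>2 = u \<bullet> cinner (T *v z) z"
    using ev by (simp add: re_part_dir_form[symmetric] power2_norm_eq_inner)
  also have "\<dots> = (cnj u *s (T *v z)) \<bullet> z"
    by (simp add: Re_cnj_mult[symmetric] Re_cinner[symmetric] cinner_scale_left)
  finally have "\<bar>m\<bar> * (norm z)\<^sup>2 \<le> norm (cnj u *s (T *v z)) * norm z"
    by (metis Cauchy_Schwarz_ineq2 abs_mult abs_of_nonneg zero_le_power2)
  also have "\<dots> \<le> norm z * norm z"
    using contr u by (simp add: norm_vector_scalar_mult mult_right_mono)
  finally show ?thesis
    using z by (simp add: power2_eq_square)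
qed

lemma unimodular_root_of_real_quadratic:
  assumes "\<bar>m::real\<bar> \<le> 1"
  obtains t where "cmod t = 1" "t * t - 2 * of_real m * t + 1 = 0"
proof
  define s where "s = sqrt (1 - m\<^sup>2)"
  have s2: "s\<^sup>2 = 1 - m\<^sup>2"
    using assms by (simp add: s_def abs_square_le_1)
  show "cmod (Complex m s) = 1"
    using s2 by (simp add: cmod_def)
  show "Complex m s * Complex m s - 2 * of_real m * Complex m s + 1 = 0"
    using s2 by (simp add: complex_eq_iff power2_eq_square algebra_simps)
qed

text \<open>An eigenvector \<open>z\<close> of \<open>Re (cnj u T)\<close> on which \<open>T\<close>
  is isometric spans, together with \<open>T z\<close>, a \<open>T\<^sup>*\<close>-invariant subspace on which \<open>T\<^sup>*\<close> acts with
  characteristic polynomial \<open>t\<^sup>2 - 2 m t + 1\<close>, whose roots are unimodular.\<close>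

lemma re_part_dir_isometric_eigenvector_eq_0:
  fixes T :: "complex^'n^'n"
  assumes contr: "\<forall>x. norm (T *v x) \<le> norm x"
    and noev: "\<And>c. is_eigenvalue T c \<Longrightarrow> cmod c \<noteq> 1" and u: "cmod u = 1"
    and ev: "re_part_dir T u *v z = m *\<^sub>R z" and isom: "adjoint_mat T *v (T *v z) = z"
  shows "z = 0"
proof (rule ccontr)
  assume z: "z \<noteq> 0"
  let ?A = "adjoint_mat T"
  obtain t where t: "cmod t = 1" and tq: "t * t - 2 * of_real m * t + 1 = 0"
    using unimodular_root_of_real_quadratic re_part_dir_eigenvalue_abs_le_1[OF contr u ev z] by blast
  define w where "w = cnj u *s (T *v z)"
  have Az: "?A *v z = cnj u *s (2 * of_real m *s z - w)"
    using re_part_dir_eigenvector_adjoint[OF ev u] by (simp add: w_def)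
  have Aw: "?A *v w = cnj u *s z"
    by (simp add: w_def matrix_vector_mult_scale isom)
  define v where "v = w - t *s z"
  have Av: "?A *v v = (cnj u * t) *s v"
  proof -
    have "(?A *v v) $ i - ((cnj u * t) *s v) $ i = cnj u * z $ i * (t * t - 2 * of_real m * t + 1)" for i
      by (simp add: v_def matrix_vector_mult_diff_distrib matrix_vector_mult_scale Az Aw algebra_simps)
    then show ?thesis
      using tq by (simp add: vec_eq_iff)
  qed
  show False
  proof (cases "v = 0")
    case True
    have "T *v z = (u * cnj u) *s (T *v z)"
      using unimodular_cnj_mult[OF u] by (simp add: mult.commute)
    also have "\<dots> = u *s w"
      by (simp add: w_def vector_smult_assoc)
    also have "\<dots> = (u * t) *s z"
      using True by (simp add: v_def vector_smult_assoc)
    finally show False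
      using noev[of "u * t"] z u t by (auto simp: is_eigenvalue_def norm_mult)
  next
    case False
    have "T *v v = cnj (cnj u * t) *s v"
      using contraction_adjoint_unimodular_eigenvector[OF contr Av] u t by (simp add: norm_mult)
    then show False
      using noev[of "cnj (cnj u * t)"] False u t by (auto simp: is_eigenvalue_def norm_mult)
  qed
qed

lemma rank_one_matrix_factorization:
  fixes D :: "complex^'n^'n"
  assumes "rank D = 1"
  obtains r c where "\<And>z. D *v z = (\<Sum>j\<in>UNIV. r $ j * z $ j) *s c"
proof -
  obtain B where B: "B \<subseteq> rows D" "rows D \<subseteq> vec.span B" "card B = vec.dim (rows D)"
    by (meson vec.basis_exists)
  then obtain r where "B = {r}"
    using assms by (metis card_1_singletonE row_rank_def_gen)
  then have "\<exists>k. row i D = k *s r" for i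
    using B(2) by (auto simp: rows_def vec.span_singleton)
  then obtain k where k: "\<And>i. row i D = k i *s r"
    by metis
  have "D *v z = (\<Sum>j\<in>UNIV. r $ j * z $ j) *s (\<chi> i. k i)" for z
  proof -
    have "D $ i $ j = k i * r $ j" for i j
      using arg_cong[OF k[of i], of "\<lambda>v. v $ j"] by (simp add: row_def)
    then show ?thesis
      by (simp add: vec_eq_iff matrix_vector_mult_def sum_distrib_left mult_ac)
  qed
  then show ?thesis
    using that by blast
qed

lemma Upsilon_defect:
  fixes T :: "complex^'n^'n"
  assumes "Upsilon T"
  obtains r c where "\<And>z. z - adjoint_mat T *v (T *v z) = (\<Sum>j\<in>UNIV. r $ j * z $ j) *s c"
proof -
  have "rank (mat 1 - adjoint_mat T ** T) = 1"
    using assms by (simp add: Upsilon_def)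
  then obtain r c where "\<And>z. (mat 1 - adjoint_mat T ** T) *v z = (\<Sum>j\<in>UNIV. r $ j * z $ j) *s c"
    using rank_one_matrix_factorization by blast
  then show ?thesis
    using that by (simp add: matrix_vector_mult_diff_rdistrib matrix_vector_mul_assoc)
qed

text \<open>\<open>L y x - L x y\<close> is an eigenvector in the kernel of the defect functional \<open>L\<close>, on which \<open>T\<close> is
  isometric, so it vanishes.\<close>

lemma Upsilon_re_part_dir_eigenvectors_collinear:
  fixes T :: "complex^'n^'n"
  assumes Ups: "Upsilon T" and u: "cmod u = 1"
    and ex: "re_part_dir T u *v x = m *\<^sub>R x" and ey: "re_part_dir T u *v y = m *\<^sub>R y" and x: "x \<noteq> 0"
  obtains k where "y = k *s x"
proof -
  have contr: "\<forall>x. norm (T *v x) \<le> norm x" and noev: "\<And>c. is_eigenvalue T c \<Longrightarrow> cmod c \<noteq> 1"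
    using Ups by (auto simp: Upsilon_def)
  obtain r c where rc: "\<And>z. z - adjoint_mat T *v (T *v z) = (\<Sum>j\<in>UNIV. r $ j * z $ j) *s c"
    using Upsilon_defect[OF Ups] by blast
  define L where "L z = (\<Sum>j\<in>UNIV. r $ j * z $ j)" for z :: "complex^'n"
  have isometric: "z = 0" if "re_part_dir T u *v z = m *\<^sub>R z" "L z = 0" for z
    using re_part_dir_isometric_eigenvector_eq_0[OF contr noev u that(1)] rc[of z] that(2)
    by (simp add: L_def)
  have "L x \<noteq> 0"
    using isometric[OF ex] x by blast
  define z where "z = L y *s x - L x *s y"
  have "re_part_dir T u *v z = m *\<^sub>R z"
    by (simp add: z_def matrix_vector_mult_diff_distrib matrix_vector_mult_scale ex ey
        of_real_vector_scalar_mult[symmetric] vector_smult_assoc mult.commute)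
  moreover have "L (a *s x' - b *s y') = a * L x' - b * L y'" for a b x' y'
    by (simp add: L_def sum_distrib_left sum_subtractf algebra_simps)
  then have "L z = 0"
    by (simp add: z_def)
  ultimately have "z = 0"
    by (rule isometric)
  then have "L x *s y = L y *s x"
    by (simp add: z_def)
  then have "y = (L y / L x) *s x"
    using \<open>L x \<noteq> 0\<close> by (simp add: vec_eq_iff field_simps)
  then show ?thesis
    using that by blast
qed

lemma Upsilon_numerical_range_not_in_line:
  fixes T :: "complex^'n^'n"
  assumes Ups: "Upsilon T" and card: "CARD('n) \<ge> 2" and u: "cmod u = 1"
  shows "\<not> (\<forall>w\<in>numerical_range T. u \<bullet> w = M)"
proof
  assume line: "\<forall>w\<in>numerical_range T. u \<bullet> w = M"
  have "\<forall>w\<in>numerical_range T. u \<bullet> w \<le> M" "\<forall>w\<in>numerical_range T. (- u) \<bullet> w \<le> - M"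
    using line by simp_all
  then have upper: "(re_part_dir T u *v y) \<bullet> y \<le> M * (norm y)\<^sup>2"
    and lower: "(re_part_dir T (- u) *v y) \<bullet> y \<le> - M * (norm y)\<^sup>2" for y
    using numerical_range_bound_imp_form_bound by blast+
  have "(re_part_dir T u *v y) \<bullet> y = M * (norm y)\<^sup>2" for y
    using upper[of y] lower[of y] re_part_dir_uminus_form[of T u y] by linarith
  then have eig: "re_part_dir T u *v y = M *\<^sub>R y" for y
    by (metis hermitian_form_maximiser_eigenvector[OF hermitian_re_part_dir] order_refl)
  obtain i j :: 'n where "i \<noteq> j"
  proof -
    have "\<not> (\<forall>i j::'n. i = j)"
    proof
      assume "\<forall>i j::'n. i = j"
      then have "CARD('n) \<le> 1"
        by (simp add: card_le_Suc0_iff_eq)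
      then show False
        using card by simp
    qed
    then show ?thesis
      using that by blast
  qed
  moreover have "axis i (1::complex) \<noteq> (0::complex^'n)"
    by (simp add: axis_eq_0_iff)
  then obtain k where "axis j (1::complex) = k *s (axis i 1 :: complex^'n)"
    using Upsilon_re_part_dir_eigenvectors_collinear[OF Ups u eig[of "axis i 1"] eig[of "axis j 1"]]
    by blast
  then have "(axis j (1::complex) :: complex^'n) $ j = (k *s (axis i 1 :: complex^'n)) $ j"
    by simp
  ultimately show False
    by (simp add: axis_def)
qed

lemma numerical_range_support_point_eigenvector:
  fixes T :: "complex^'n^'n"
  assumes "\<forall>w\<in>numerical_range T. u \<bullet> w \<le> M" and "norm x = 1" and "u \<bullet> cinner (T *v x) x = M"
  shows "re_part_dir T u *v x = M *\<^sub>R x"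
  using hermitian_form_maximiser_eigenvector[OF hermitian_re_part_dir numerical_range_bound_imp_form_bound[OF assms(1)]]
    assms(2,3) by (simp add: re_part_dir_form)

lemma Upsilon_supporting_line_meets_once:
  fixes T :: "complex^'n^'n"
  assumes Ups: "Upsilon T" and u: "cmod u = 1" and bound: "\<forall>w\<in>numerical_range T. u \<bullet> w \<le> M"
    and p: "p \<in> numerical_range T" "u \<bullet> p = M" and q: "q \<in> numerical_range T" "u \<bullet> q = M"
  shows "p = q"
proof -
  obtain x y where x: "norm x = 1" "p = cinner (T *v x) x" and y: "norm y = 1" "q = cinner (T *v y) y"
    using p(1) q(1) by (auto simp: numerical_range_def)
  have "re_part_dir T u *v x = M *\<^sub>R x" "re_part_dir T u *v y = M *\<^sub>R y"
    using numerical_range_support_point_eigenvector[OF bound] x y p(2) q(2) by simp_all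
  moreover have "x \<noteq> 0"
    using x by auto
  ultimately obtain k where "y = k *s x"
    using Upsilon_re_part_dir_eigenvectors_collinear[OF Ups u] by metis
  then show ?thesis
    using cinner_unit_multiple x y by metis
qed

section \<open>Differentiability of \<open>\<lambda>\<close>\<close>

lemma lam_eq_Max_re_part_dir: "lam T \<theta> = Max {\<mu>. is_eigenvalue (re_part_dir T (cis \<theta>)) (of_real \<mu>)}"
  by (simp add: lam_def re_part_eq_re_part_dir cis_conv_exp)

lemma Upsilon_lam_has_derivative:
  fixes T :: "complex^'n^'n"
  assumes Ups: "Upsilon T"
  obtains D where "(lam T has_real_derivative D) (at \<theta>0)"
proof -
  have bound: "\<forall>w\<in>numerical_range T. cis \<theta> \<bullet> w \<le> lam T \<theta>"
    and attained: "\<exists>p\<in>numerical_range T. cis \<theta> \<bullet> p = lam T \<theta>" for \<theta>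
    using numerical_range_support_max_eigenvalue[where T=T and u="cis \<theta>"]
    by (auto simp: lam_eq_Max_re_part_dir numerical_range_def)
  define p where "p \<theta> = (SOME p. p \<in> numerical_range T \<and> cis \<theta> \<bullet> p = lam T \<theta>)" for \<theta>
  have p: "p \<theta> \<in> numerical_range T" "cis \<theta> \<bullet> p \<theta> = lam T \<theta>" for \<theta>
    using someI_ex[OF attained[unfolded Bex_def]] by (simp_all add: p_def)
  have "lam T = (\<lambda>\<theta>. cis \<theta> \<bullet> p \<theta>)"
    using p(2) by simp
  moreover have "((\<lambda>\<theta>. cis \<theta> \<bullet> p \<theta>) has_real_derivative (\<i> * cis \<theta>0) \<bullet> p \<theta>0) (at \<theta>0)"
  proof (rule support_function_has_derivative[OF numerical_range_compact p(1)])
    show "cis \<theta> \<bullet> w \<le> cis \<theta> \<bullet> p \<theta>" if "w \<in> numerical_range T" for \<theta> w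
      using bound that p(2) by simp
    show "w = p \<theta>" if "w \<in> numerical_range T" "cis \<theta> \<bullet> w = cis \<theta> \<bullet> p \<theta>" for \<theta> w
      using Upsilon_supporting_line_meets_once[OF Ups _ bound that(1) _ p(1)] that(2) p(2) by simp
  qed
  ultimately show ?thesis
    using that by simp
qed

section \<open>The boundary of the numerical range\<close>

lemma re_part_dir_two_directions_eigenvector:
  fixes T :: "complex^'n^'n"
  assumes u1: "cmod u1 = 1" and u2: "cmod u2 = 1" and ne: "u1 \<noteq> u2" "u1 \<noteq> - u2"
    and e1: "re_part_dir T u1 *v x = M1 *\<^sub>R x" and e2: "re_part_dir T u2 *v x = M2 *\<^sub>R x"
    and x: "x \<noteq> 0"
  obtains \<alpha> where "T *v x = \<alpha> *s x" "adjoint_mat T *v x = cnj \<alpha> *s x"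
proof -
  let ?A = "adjoint_mat T"
  define d where "d = cnj u1 * cnj u1 - cnj u2 * cnj u2"
  have "d \<noteq> 0"
  proof
    assume "d = 0"
    then have "(cnj u1 - cnj u2) * (cnj u1 + cnj u2) = 0"
      by (simp add: d_def algebra_simps)
    then have "cnj u1 = cnj u2 \<or> cnj u1 = - cnj u2"
      by (auto simp: add_eq_0_iff)
    then show False
      using ne by (metis complex_cnj_cancel_iff complex_cnj_minus)
  qed
  define \<alpha> where "\<alpha> = 2 * (cnj u1 * of_real M1 - cnj u2 * of_real M2) / d"
  have A1: "?A *v x = cnj u1 *s (2 * of_real M1 *s x - cnj u1 *s (T *v x))"
    and A2: "?A *v x = cnj u2 *s (2 * of_real M2 *s x - cnj u2 *s (T *v x))"
    using re_part_dir_eigenvector_adjoint[OF e1 u1] re_part_dir_eigenvector_adjoint[OF e2 u2] by simp_all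
  have Tx: "T *v x = \<alpha> *s x"
  proof -
    have "d * (T *v x) $ i = 2 * (cnj u1 * of_real M1 - cnj u2 * of_real M2) * x $ i" for i
      using arg_cong[OF trans[OF A1[symmetric] A2], of "\<lambda>v. v $ i"] by (simp add: d_def algebra_simps)
    then show ?thesis
      using \<open>d \<noteq> 0\<close> by (simp add: vec_eq_iff \<alpha>_def field_simps)
  qed
  define \<beta> where "\<beta> = cnj u1 * (2 * of_real M1 - cnj u1 * \<alpha>)"
  have Ax: "?A *v x = \<beta> *s x"
    using A1 by (simp add: Tx \<beta>_def vec_eq_iff algebra_simps)
  have "\<beta> * cinner x x = cnj \<alpha> * cinner x x"
    using cinner_adjoint_right[of x T x] unfolding Ax Tx cinner_scale_left cinner_scale_right by (rule sym)
  moreover have "cinner x x \<noteq> 0"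
    using x by (simp add: cinner_self)
  ultimately have "\<beta> = cnj \<alpha>"
    by (metis mult_cancel_right)
  then show ?thesis
    using that Tx Ax by blast
qed

lemma re_part_dir_normal_eigenvector:
  assumes "T *v x = \<alpha> *s x" "adjoint_mat T *v x = cnj \<alpha> *s x"
  shows "re_part_dir T u *v x = (u \<bullet> \<alpha>) *\<^sub>R x"
proof -
  have "cnj u * \<alpha> + u * cnj \<alpha> = 2 * of_real (u \<bullet> \<alpha>)"
    by (simp add: complex_eq_iff inner_complex_def)
  moreover have "(re_part_dir T u *v x) $ i = (cnj u * \<alpha> + u * cnj \<alpha>) / 2 * x $ i" for i
    using assms by (simp add: re_part_dir_mult_component algebra_simps)
  ultimately have "(re_part_dir T u *v x) $ i = of_real (u \<bullet> \<alpha>) * x $ i" for i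
    by simp
  then show ?thesis
    by (simp add: vec_eq_iff of_real_vector_scalar_mult[symmetric])
qed

text \<open>A common eigenvector \<open>x\<close> of \<open>T\<close> and \<open>T\<^sup>*\<close> reduces \<open>T\<close>; since \<open>|\<alpha>| < 1\<close> the defect does not vanish
  on \<open>x\<close>, so the rank-one defect lives on \<open>span {x}\<close> and \<open>T\<close> is isometric on \<open>x\<^sup>\<bottom>\<close>.\<close>

lemma Upsilon_reducing_eigenvector:
  fixes T :: "complex^'n^'n"
  assumes Ups: "Upsilon T" and Tx: "T *v x = \<alpha> *s x" and Ax: "adjoint_mat T *v x = cnj \<alpha> *s x"
    and x: "x \<noteq> 0" and y: "cinner y x = 0"
  shows "adjoint_mat T *v (T *v y) = y"
proof -
  let ?A = "adjoint_mat T"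
  have "cmod \<alpha> \<le> 1"
    using Ups x by (auto simp: Upsilon_def Tx norm_vector_scalar_mult dest: spec[of _ x])
  moreover have "cmod \<alpha> \<noteq> 1"
    using Ups Tx x by (auto simp: Upsilon_def is_eigenvalue_def)
  ultimately have "(cmod \<alpha>)\<^sup>2 < 1"
    by (simp add: abs_square_less_1)
  obtain r c where rc: "\<And>z. z - ?A *v (T *v z) = (\<Sum>j\<in>UNIV. r $ j * z $ j) *s c"
    using Upsilon_defect[OF Ups] by blast
  define L where "L z = (\<Sum>j\<in>UNIV. r $ j * z $ j)" for z :: "complex^'n"
  have "\<alpha> * cnj \<alpha> = of_real ((cmod \<alpha>)\<^sup>2)"
    by (rule complex_norm_square[symmetric])
  then have "x - ?A *v (T *v x) = of_real (1 - (cmod \<alpha>)\<^sup>2) *s x"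
    by (simp add: Tx Ax matrix_vector_mult_scale vector_smult_assoc vec_eq_iff algebra_simps)
  then have Lx: "L x *s c = of_real (1 - (cmod \<alpha>)\<^sup>2) *s x"
    using rc by (simp add: L_def)
  have "cinner (y - ?A *v (T *v y)) x = 0"
    using y by (simp add: cinner_diff_left cinner_adjoint_right[symmetric] Tx cinner_scale_right
        cinner_adjoint Ax)
  then have Ly: "L y * cinner c x = 0"
    using rc by (simp add: L_def cinner_scale_left)
  have "L x * cinner c x = of_real (1 - (cmod \<alpha>)\<^sup>2) * cinner x x"
    using arg_cong[OF Lx, of "\<lambda>v. cinner v x"] unfolding cinner_scale_left .
  moreover have "complex_of_real (1 - (cmod \<alpha>)\<^sup>2) \<noteq> 0" "cinner x x \<noteq> 0"
    using \<open>(cmod \<alpha>)\<^sup>2 < 1\<close> x by (simp_all only: of_real_eq_0_iff cinner_self) simp_all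
  ultimately have "cinner c x \<noteq> 0"
    by auto
  with Ly have "L y = 0"
    by simp
  then show ?thesis
    using rc[of y] by (simp add: L_def)
qed

lemma Upsilon_reducing_eigenvector_supports:
  fixes T :: "complex^'n^'n"
  assumes Ups: "Upsilon T" and u: "cmod u = 1" and ex: "re_part_dir T u *v x = e *\<^sub>R x"
    and reducing: "\<And>y. cinner y x = 0 \<Longrightarrow> adjoint_mat T *v (T *v y) = y"
  shows "\<forall>w\<in>numerical_range T. u \<bullet> w \<le> e"
proof -
  let ?m = "Max {\<mu>. is_eigenvalue (re_part_dir T u) (of_real \<mu>)}"
  obtain y where y: "norm y = 1" "re_part_dir T u *v y = ?m *\<^sub>R y"
    using hermitian_max_eigenvalue[OF hermitian_re_part_dir] by metis
  have "?m = e"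
  proof (rule ccontr)
    assume "?m \<noteq> e"
    then have "cinner y x = 0"
      using hermitian_eigenvectors_orthogonal[OF hermitian_re_part_dir y(2) ex] by blast
    then have "y = 0"
      using re_part_dir_isometric_eigenvector_eq_0[OF _ _ u y(2) reducing] Ups by (auto simp: Upsilon_def)
    then show False
      using y(1) by simp
  qed
  then show ?thesis
    using numerical_range_support_max_eigenvalue(1)[of T u] by simp
qed

lemma Upsilon_no_corner:
  fixes T :: "complex^'n^'n"
  assumes Ups: "Upsilon T" and card: "CARD('n) \<ge> 2" and p: "p \<in> numerical_range T"
    and s1: "supports (numerical_range T) p u1" and s2: "supports (numerical_range T) p u2"
  shows "u1 = u2"
proof (rule ccontr)
  assume "u1 \<noteq> u2"
  have u1: "cmod u1 = 1" and u2: "cmod u2 = 1"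
    and b1: "\<forall>w\<in>numerical_range T. u1 \<bullet> w \<le> u1 \<bullet> p" and b2: "\<forall>w\<in>numerical_range T. u2 \<bullet> w \<le> u2 \<bullet> p"
    using s1 s2 unfolding supports_def Re_cnj_mult by auto
  have "\<exists>M. \<forall>w\<in>numerical_range T. u1 \<bullet> w = M"
  proof (cases "u1 = - u2")
    case True
    then show ?thesis
      using b1 b2 by (metis inner_minus_left neg_le_iff_le order_antisym)
  next
    case False
    obtain x where x: "norm x = 1" "p = cinner (T *v x) x"
      using p by (auto simp: numerical_range_def)
    then have "x \<noteq> 0"
      by auto
    obtain \<alpha> where Tx: "T *v x = \<alpha> *s x" and Ax: "adjoint_mat T *v x = cnj \<alpha> *s x"
      using re_part_dir_two_directions_eigenvector[OF u1 u2 \<open>u1 \<noteq> u2\<close> False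
          numerical_range_support_point_eigenvector[OF b1 x(1)]
          numerical_range_support_point_eigenvector[OF b2 x(1)] \<open>x \<noteq> 0\<close>] x(2)
      by blast
    have reducing: "\<And>y. cinner y x = 0 \<Longrightarrow> adjoint_mat T *v (T *v y) = y"
      using Upsilon_reducing_eigenvector[OF Ups Tx Ax \<open>x \<noteq> 0\<close>] by blast
    note supp = Upsilon_reducing_eigenvector_supports[OF Ups _ re_part_dir_normal_eigenvector[OF Tx Ax] reducing]
    have "\<forall>w\<in>numerical_range T. u1 \<bullet> w \<le> u1 \<bullet> \<alpha>"
      using supp[OF u1] .
    moreover have "\<forall>w\<in>numerical_range T. (- u1) \<bullet> w \<le> (- u1) \<bullet> \<alpha>"
      using supp[of "- u1"] u1 by simp
    ultimately show ?thesis
      by (metis inner_minus_left neg_le_iff_le order_antisym)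
  qed
  then show False
    using Upsilon_numerical_range_not_in_line[OF Ups card u1] by blast
qed

lemma convex_frontier_supporting_vector:
  fixes W :: "'a::euclidean_space set"
  assumes cv: "convex W" and cl: "closed W" and c: "c \<in> frontier W"
  obtains v where "v \<noteq> 0" "\<forall>w\<in>W. v \<bullet> w \<le> v \<bullet> c"
proof (cases "interior W = {}")
  case True
  then obtain a b where ab: "a \<noteq> 0" "W \<subseteq> {x. a \<bullet> x = b}"
    using empty_interior_subset_hyperplane[OF cv] by metis
  moreover have "c \<in> W"
    using c cl frontier_subset_closed by blast
  ultimately have "\<forall>w\<in>W. a \<bullet> w \<le> a \<bullet> c"
    by (metis (mono_tags) mem_Collect_eq order_refl subsetD)
  then show ?thesis
    using that ab(1) by blast
next
  case False
  have "{c} \<inter> interior W = {}"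
    using c by (auto simp: frontier_def)
  then obtain a b where ab: "a \<noteq> 0" "a \<bullet> c \<le> b" "\<forall>x\<in>interior W. a \<bullet> x \<ge> b"
    using separating_hyperplane_sets[of "{c}" "interior W"] False cv by auto
  have "W \<subseteq> closure (interior W)"
    using convex_closure_interior[OF cv False] closure_subset by blast
  also have "\<dots> \<subseteq> {x. b \<le> a \<bullet> x}"
    using ab(3) by (intro closure_minimal) (auto intro: closed_halfspace_ge)
  finally have "\<forall>w\<in>W. (- a) \<bullet> w \<le> (- a) \<bullet> c"
    using ab(2) by force
  then show ?thesis
    using that ab(1) by (metis neg_equal_0_iff_equal)
qed

lemma Upsilon_no_boundary_segment:
  fixes T :: "complex^'n^'n"
  assumes Ups: "Upsilon T" and seg: "closed_segment a b \<subseteq> frontier (numerical_range T)"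
  shows "a = b"
proof -
  let ?W = "numerical_range T"
  have "frontier ?W \<subseteq> ?W"
    using numerical_range_compact compact_imp_closed frontier_subset_closed by blast
  then have ab: "a \<in> ?W" "b \<in> ?W"
    using seg by auto
  define c where "c = midpoint a b"
  have "c \<in> frontier ?W"
    using seg midpoint_in_closed_segment unfolding c_def by blast
  then obtain v where "v \<noteq> 0" and v: "\<forall>w\<in>?W. v \<bullet> w \<le> v \<bullet> c"
    using convex_frontier_supporting_vector[OF numerical_range_convex
        compact_imp_closed[OF numerical_range_compact]] by blast
  have "v \<bullet> a + v \<bullet> b = 2 * (v \<bullet> c)"
    by (simp add: c_def midpoint_def inner_add_right)
  moreover have "v \<bullet> a \<le> v \<bullet> c" "v \<bullet> b \<le> v \<bullet> c"
    using v ab by auto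
  ultimately have "v \<bullet> a = v \<bullet> c" "v \<bullet> b = v \<bullet> c"
    by linarith+
  define u where "u = sgn v"
  have u: "cmod u = 1"
    using \<open>v \<noteq> 0\<close> by (simp add: u_def norm_sgn)
  have u_inner: "u \<bullet> w = (v \<bullet> w) / cmod v" for w
    by (simp add: u_def sgn_div_norm divide_inverse_commute)
  have "\<forall>w\<in>?W. u \<bullet> w \<le> u \<bullet> c"
    using v by (simp add: u_inner divide_right_mono)
  then show "a = b"
    using Upsilon_supporting_line_meets_once[OF Ups u _ ab(1) _ ab(2)] \<open>v \<bullet> a = v \<bullet> c\<close> \<open>v \<bullet> b = v \<bullet> c\<close>
    by (simp add: u_inner)
qed

theorem mainTheorem4:
  fixes T :: "complex^'n^'n"
  assumes "CARD('n) \<ge> 2"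
    and "Upsilon T"
  shows "regular_boundary (numerical_range T)
    \<and> (\<forall>\<theta>\<in>{0..<2*pi}. lam T differentiable (at \<theta>))"
proof
  have "frontier (numerical_range T) \<subseteq> numerical_range T"
    using numerical_range_compact compact_imp_closed frontier_subset_closed by blast
  then have "\<not> corner_point (numerical_range T) p" for p
    using Upsilon_no_corner[OF assms(2,1)] unfolding corner_point_def by blast
  then show "regular_boundary (numerical_range T)"
    using Upsilon_no_boundary_segment[OF assms(2)] by (auto simp: regular_boundary_def)
  show "\<forall>\<theta>\<in>{0..<2*pi}. lam T differentiable (at \<theta>)"
    using Upsilon_lam_has_derivative[OF assms(2)] real_differentiable_def by blast
qed

end
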